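(* In the setting described in the context, let $G\in R_w$ and $H\in R_z$ ($w,z\in\mathbb{Z}^n_{\ge0}$) be coprime polynomials in $\mathbb{K}[x_1,\dots,x_n][y]$. If $G$ is monic with respect to $y$, then for every $i\in M$ one has $G\,R_{z+i}+H\,R_{w+i}=R_{w+z+i}$.
   Context: Let $\mathbb{K}$ be a field and consider the polynomial ring $\mathbb{K}[x_1,\dots,x_n][y]$ in $n+1$ variables, monomials $\underline x^\alpha y^j$ identified with exponents in $\mathbb{Z}^{n+1}_{\ge0}$. A Newton polyhedron in $\mathbb{R}^{n+1}_{\ge0}$ is the convex hull of $S+\mathbb{R}^{n+1}_{\ge0}$ for a nonempty finite $S\subset\mathbb{Z}^{n+1}_{\ge0}$; for $\xi\in\mathbb{R}^{n+1}_{\ge0}$ the face $\Delta^\xi=\{a\in\Delta:\langle\xi,a\rangle=\min_{b\in\Delta}\langle\xi,b\rangle\}$ is compact iff $\xi\in\mathbb{R}^{n+1}_{>0}$; a loose edge is a compact 1-dimensional face not contained in any compact face of dimension $\ge2$; a segment is descendant if it is parallel to a vector $(c_1,\dots,c_{n+1})$ with $c_i\ge0$ for $i\le n$ and $c_{n+1}<0$. Let $\Delta\subset\mathbb{R}^{n+1}_{\ge0}$ be a Newton polyhedron with a loose descendant edge $E$, let $c\in\mathbb{Z}^{n+1}$ be a primitive lattice vector parallel to $E$, and let $\xi_1,\dots,\xi_n\in\mathbb{Z}^{n+1}_{\ge0}$ be linearly independent with $\langle\xi_i,c\rangle=0$. For $\gamma\in\mathbb{Z}^{n+1}$ define the weight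 $\omega$ of the corresponding monomial as $(\langle\xi_1,\gamma\rangle,\dots,\langle\xi_n,\gamma\rangle)\in\mathbb{Z}^n$. For $w\in\mathbb{Z}^n_{\ge0}$ let $R_w\subset\mathbb{K}[x_1,\dots,x_n,y]$ be the $\mathbb{K}$-span of monomials with exponent in $\mathbb{Z}^{n+1}_{\ge0}$ of weight $w$. Let $M$ be the set of $z\in\mathbb{Z}^n_{\ge0}$ for which there is $\gamma\in\mathbb{Z}^{n+1}$ of weight $z$ with $\langle\xi,\gamma\rangle\ge0$ for all $\xi\in\mathbb{R}^{n+1}_{\ge0}$ orthogonal to $E$. *)

theory Defs
  imports "HOL-Analysis.Analysis" "HOL-Library.Poly_Mapping"
begin

(* Variables of K[x_1..x_n][y] are indexed by a finite type 'm; a distinguished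
   element y :: 'm is the variable y, the others are x_1..x_n; so n = CARD('m) - 1.
   Exponent vectors live in Z^{n+1} = int^'m, real points in R^{n+1} = real^'m. *)

definition rvec :: "int ^ 'm \<Rightarrow> real ^ 'm" where
  "rvec v = (\<chi> j. real_of_int (v $ j))"

definition iinner :: "int ^ 'm::finite \<Rightarrow> int ^ 'm \<Rightarrow> int" where
  "iinner a b = (\<Sum>j\<in>UNIV. a $ j * b $ j)"

definition expvec :: "('m \<Rightarrow>\<^sub>0 nat) \<Rightarrow> int ^ 'm" where
  "expvec e = (\<chi> j. int (Poly_Mapping.lookup e j))"

definition nonneg_orthant :: "(real ^ 'm) set" where
  "nonneg_orthant = {v. \<forall>j. 0 \<le> v $ j}"

definition newton_polyhedron :: "(real ^ 'm::finite) set \<Rightarrow> bool" where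
  "newton_polyhedron \<Delta> \<longleftrightarrow>
     (\<exists>S. finite S \<and> S \<noteq> {} \<and> (\<forall>s\<in>S. \<forall>j. s $ j \<in> \<int> \<and> 0 \<le> s $ j) \<and>
          \<Delta> = convex hull {s + v | s v. s \<in> S \<and> v \<in> nonneg_orthant})"

definition face_of_wt :: "(real ^ 'm::finite) set \<Rightarrow> real ^ 'm \<Rightarrow> (real ^ 'm) set" where
  "face_of_wt \<Delta> \<xi> = {a\<in>\<Delta>. \<xi> \<bullet> a = (INF b\<in>\<Delta>. \<xi> \<bullet> b)}"

definition compact_face :: "(real ^ 'm::finite) set \<Rightarrow> (real ^ 'm) set \<Rightarrow> bool" where
  "compact_face \<Delta> F \<longleftrightarrow> (\<exists>\<xi>\<in>nonneg_orthant. F = face_of_wt \<Delta> \<xi>) \<and> compact F"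

definition loose_edge :: "(real ^ 'm::finite) set \<Rightarrow> (real ^ 'm) set \<Rightarrow> bool" where
  "loose_edge \<Delta> E \<longleftrightarrow> compact_face \<Delta> E \<and> aff_dim E = 1 \<and>
     \<not> (\<exists>F. compact_face \<Delta> F \<and> aff_dim F \<ge> 2 \<and> E \<subseteq> F)"

definition parallel_to :: "(real ^ 'm::finite) set \<Rightarrow> real ^ 'm \<Rightarrow> bool" where
  "parallel_to E d \<longleftrightarrow> d \<noteq> 0 \<and> (\<forall>a\<in>E. \<forall>b\<in>E. \<exists>t::real. b - a = t *\<^sub>R d)"

definition descendant :: "'m \<Rightarrow> (real ^ 'm::finite) set \<Rightarrow> bool" where
  "descendant y E \<longleftrightarrow> (\<exists>d. parallel_to E d \<and> (\<forall>j. j \<noteq> y \<longrightarrow> 0 \<le> d $ j) \<and> d $ y < 0)"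

definition primitive_lattice :: "int ^ 'm::finite \<Rightarrow> bool" where
  "primitive_lattice c \<longleftrightarrow> c \<noteq> 0 \<and> (\<forall>k::int. (\<forall>j. k dvd c $ j) \<longrightarrow> is_unit k)"

definition weight :: "nat \<Rightarrow> (nat \<Rightarrow> int ^ 'm::finite) \<Rightarrow> int ^ 'm \<Rightarrow> (nat \<Rightarrow> int)" where
  "weight n \<xi> \<gamma> = (\<lambda>i. if i < n then iinner (\<xi> i) \<gamma> else 0)"

definition nonneg_weights :: "nat \<Rightarrow> (nat \<Rightarrow> int) set" where
  "nonneg_weights n = {w. \<forall>i. (i < n \<longrightarrow> 0 \<le> w i) \<and> (n \<le> i \<longrightarrow> w i = 0)}"

definition wadd :: "(nat \<Rightarrow> int) \<Rightarrow> (nat \<Rightarrow> int) \<Rightarrow> (nat \<Rightarrow> int)" where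
  "wadd a b = (\<lambda>i. a i + b i)"

definition Rw :: "nat \<Rightarrow> (nat \<Rightarrow> int ^ 'm::finite) \<Rightarrow> (nat \<Rightarrow> int) \<Rightarrow> (('m \<Rightarrow>\<^sub>0 nat) \<Rightarrow>\<^sub>0 'k::field) set" where
  "Rw n \<xi> w = {P. \<forall>e\<in>Poly_Mapping.keys P. weight n \<xi> (expvec e) = w}"

definition Mset :: "nat \<Rightarrow> (nat \<Rightarrow> int ^ 'm::finite) \<Rightarrow> int ^ 'm \<Rightarrow> (nat \<Rightarrow> int) set" where
  "Mset n \<xi> c = {z \<in> nonneg_weights n. \<exists>\<gamma>::int ^ 'm. weight n \<xi> \<gamma> = z \<and>
       (\<forall>\<eta>\<in>nonneg_orthant. \<eta> \<bullet> rvec c = 0 \<longrightarrow> 0 \<le> \<eta> \<bullet> rvec \<gamma>)}"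

definition coprime_poly :: "'a::comm_semiring_1 \<Rightarrow> 'a \<Rightarrow> bool" where
  "coprime_poly G H \<longleftrightarrow> (\<forall>C. C dvd G \<longrightarrow> C dvd H \<longrightarrow> C dvd 1)"

(* monic with respect to y: the coefficient (in K[x]) of the highest power of y is 1 *)
definition monic_in :: "'m \<Rightarrow> (('m \<Rightarrow>\<^sub>0 nat) \<Rightarrow>\<^sub>0 'k::field) \<Rightarrow> bool" where
  "monic_in y G \<longleftrightarrow> (\<exists>d. Poly_Mapping.lookup G (Poly_Mapping.single y d) = 1 \<and>
     (\<forall>e\<in>Poly_Mapping.keys G. Poly_Mapping.lookup e y \<le> d \<and> (Poly_Mapping.lookup e y = d \<longrightarrow> e = Poly_Mapping.single y d)))"

end

(*
  Normalise the primitive edge direction c so that c_y < 0 and c_k >= 0 for k <> y. The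
  weights vanish exactly on the multiples of c, so inside one weight class a monomial is
  determined by its y-degree, and the occurring y-degrees form a set that lies in one residue
  class modulo the period -c_y and is closed downwards within it. Setting every x_k to 1
  therefore embeds each weight class R_v into K[y], compatibly with products, with image the
  polynomials supported on those y-degrees. The image g of G is monic and coprime to the
  image h of H, since a common factor of g and h lifts to a common factor of G and H.
  For F of weight w + z + i, a Bezout identity projected onto residue classes gives
  f = g a + h r with deg r < deg g. The hypothesis i in M provides all y-degrees below deg g
  of the right class in weight w + i, so r lifts to R_(w+i); comparing leading terms shows
  that a lifts to R_(z+i), and injectivity of the embedding gives F = G A + H B.
*)

theory Submission
  imports Defs "HOL-Computational_Algebra.Polynomial_Factorial"
begin

section \<open>Coprimality and residue classes of univariate polynomials\<close>

lemma nat_mod_eq_iff_int_dvd: "(a::nat) mod C = b mod C \<longleftrightarrow> int C dvd int a - int b"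
  by (metis mod_eq_dvd_iff of_nat_eq_iff zmod_int)

lemma bezout_imp_coprime:
  fixes a b :: "'a::algebraic_semidom"
  assumes "u * a + v * b = 1"
  shows "coprime a b"
proof (rule coprimeI)
  fix d assume "d dvd a" "d dvd b"
  then have "d dvd u * a + v * b" by simp
  then show "is_unit d" using assms by simp
qed

text \<open>A nonzero combination \<open>u * a + v * b\<close> of least degree divides \<open>a\<close> and \<open>b\<close>,
  since the remainder of any such combination modulo it is again one.\<close>

lemma coprime_imp_bezout_field_poly:
  fixes a b :: "'k::field poly"
  assumes "coprime a b"
  obtains u v where "u * a + v * b = 1"
proof -
  define S where "S = {p. p \<noteq> 0 \<and> (\<exists>u v. p = u * a + v * b)}"
  have "a = 1 * a + 0 * b" "b = 0 * a + 1 * b" by simp_all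
  moreover have "a \<noteq> 0 \<or> b \<noteq> 0"
    using assms coprime_0_left_iff[of b] is_unit_iff_degree[of "0::'k poly"] by auto
  ultimately have "S \<noteq> {}" unfolding S_def by blast
  then obtain p where p: "p \<in> S" and min: "\<And>q. q \<in> S \<Longrightarrow> degree p \<le> degree q"
    using ex_has_least_nat[of "\<lambda>p. p \<in> S" _ degree] by blast
  then obtain u v where p_eq: "p = u * a + v * b" and "p \<noteq> 0" unfolding S_def by blast
  have dvd_comb: "p dvd u' * a + v' * b" for u' v'
  proof (rule ccontr)
    let ?x = "u' * a + v' * b"
    assume "\<not> p dvd ?x"
    then have "?x mod p \<noteq> 0" by (simp add: mod_eq_0_iff_dvd)
    moreover have "?x mod p = (u' - (?x div p) * u) * a + (v' - (?x div p) * v) * b"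
      by (simp add: minus_div_mult_eq_mod [symmetric] p_eq algebra_simps)
    ultimately have "?x mod p \<in> S" unfolding S_def by blast
    then have "degree p \<le> degree (?x mod p)" by (rule min)
    moreover have "degree (?x mod p) < degree p"
      using degree_mod_less[OF \<open>p \<noteq> 0\<close>] \<open>?x mod p \<noteq> 0\<close> by blast
    ultimately show False by simp
  qed
  have "p dvd a" "p dvd b" using dvd_comb[of 1 0] dvd_comb[of 0 1] by simp_all
  then have "is_unit p" using assms by (meson coprime_common_divisor)
  then obtain q where "1 = p * q" by (auto elim: dvdE)
  then have "(q * u) * a + (q * v) * b = 1" by (simp add: p_eq algebra_simps)
  then show thesis by (rule that)
qed

lemma coprime_mult_left_field_poly:
  fixes a b c :: "'k::field poly"
  assumes "coprime a c" "coprime b c"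
  shows "coprime (a * b) c"
proof -
  obtain u v where 1: "u * a + v * c = 1" using coprime_imp_bezout_field_poly[OF assms(1)] .
  obtain u' v' where 2: "u' * b + v' * c = 1" using coprime_imp_bezout_field_poly[OF assms(2)] .
  have "(u * a) * (u' * b) = (1 - v * c) * (1 - v' * c)"
    using 1 2 by (metis add_diff_cancel_right')
  then have "(u * u') * (a * b) + (v + v' - v * v' * c) * c = 1"
    by (simp add: algebra_simps)
  then show ?thesis by (rule bezout_imp_coprime)
qed

lemma coprime_mult_right_field_poly:
  fixes a b c :: "'k::field poly"
  assumes "coprime a b" "coprime a c"
  shows "coprime a (b * c)"
  using coprime_mult_left_field_poly assms coprime_commute by metis

lemma coprime_pcompose:
  fixes a b q :: "'k::field poly"
  assumes "coprime a b"
  shows "coprime (pcompose a q) (pcompose b q)"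
proof -
  obtain u v where "u * a + v * b = 1" using coprime_imp_bezout_field_poly[OF assms] .
  then have "pcompose (u * a + v * b) q = 1" by (simp add: pcompose_1)
  then have "pcompose u q * pcompose a q + pcompose v q * pcompose b q = 1"
    by (simp add: pcompose_add pcompose_mult)
  then show ?thesis by (rule bezout_imp_coprime)
qed

lemma coprime_monom_if_poly_0_nonzero:
  fixes q :: "'k::field poly"
  assumes "poly q 0 \<noteq> 0"
  shows "coprime (monom 1 r) q"
proof -
  have "coprime [:0, 1:] q"
  proof (rule coprimeI)
    fix d assume "d dvd [:0, 1:]" "d dvd q"
    have "\<not> [:0, 1:] dvd q" using assms poly_eq_0_iff_dvd[of q 0] by simp
    then show "is_unit d"
      using irreducibleD'[OF irreducible_linear_field_poly \<open>d dvd [:0, 1:]\<close>] \<open>d dvd q\<close>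
      by (auto intro: dvd_trans)
  qed
  then have "coprime ([:0, 1:] ^ r) q"
  proof (induction r)
    case (Suc r)
    then show ?case using coprime_mult_left_field_poly[OF \<open>coprime [:0, 1:] q\<close>] by simp
  qed simp
  then show ?thesis by (simp add: monom_altdef)
qed

lemma coeff_pcompose_monom:
  fixes q :: "'a::comm_semiring_1 poly"
  assumes "C > 0"
  shows "coeff (pcompose q (monom 1 C)) j = (if C dvd j then coeff q (j div C) else 0)"
  using assms
proof (induction q arbitrary: j rule: pCons_induct)
  case 0
  then show ?case by simp
next
  case (pCons a q)
  have "coeff (pcompose (pCons a q) (monom 1 C)) j
      = (if j = 0 then a else 0) + (if j < C then 0 else coeff (pcompose q (monom 1 C)) (j - C))"
    by (simp add: pcompose_pCons coeff_monom_mult coeff_pCons split: nat.splits)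
  also have "\<dots> = (if C dvd j then coeff (pCons a q) (j div C) else 0)"
  proof (cases "j < C")
    case True
    then show ?thesis using pCons.prems by (auto dest: dvd_imp_le)
  next
    case False
    then have "j div C = Suc ((j - C) div C)" "C dvd j - C \<longleftrightarrow> C dvd j" "j \<noteq> 0"
      using le_div_geq[of C j] pCons.prems by (simp_all add: dvd_minus_self)
    then show ?thesis using pCons.IH[OF pCons.prems, of "j - C"] False by simp
  qed
  finally show ?case .
qed

lemma coprime_monom_pcompose:
  fixes qg qh :: "'k::field poly"
  assumes C: "C > 0" and cop: "coprime qg qh" and r: "rg = 0 \<or> rh = 0"
    and h0: "0 < rg \<Longrightarrow> poly qh 0 \<noteq> 0" and g0: "0 < rh \<Longrightarrow> poly qg 0 \<noteq> 0"
  shows "coprime (monom 1 rg * pcompose qg (monom 1 C)) (monom 1 rh * pcompose qh (monom 1 C))"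
proof -
  have poly_0: "poly (pcompose q (monom 1 C)) 0 = poly q 0" for q :: "'k poly"
    using C by (simp add: poly_pcompose poly_monom zero_power)
  have "coprime (monom 1 rg) (monom 1 rh :: 'k poly)"
    using r by (auto simp: monom_0 one_pCons[symmetric])
  moreover have "coprime (monom 1 rg) (pcompose qh (monom 1 C))"
    using h0 poly_0 by (cases "rg = 0") (auto simp: monom_0 one_pCons[symmetric] coprime_monom_if_poly_0_nonzero)
  moreover have "coprime (monom 1 rh) (pcompose qg (monom 1 C))"
    using g0 poly_0 by (cases "rh = 0") (auto simp: monom_0 one_pCons[symmetric] coprime_monom_if_poly_0_nonzero)
  moreover have "coprime (pcompose qg (monom 1 C)) (pcompose qh (monom 1 C))"
    using cop by (rule coprime_pcompose)
  ultimately show ?thesis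
    by (simp add: coprime_mult_left_field_poly coprime_mult_right_field_poly coprime_commute)
qed

definition coeff_support :: "'a::zero poly \<Rightarrow> nat set" where
  "coeff_support p = {j. coeff p j \<noteq> 0}"

definition residue_homogeneous :: "nat \<Rightarrow> nat \<Rightarrow> 'a::zero poly \<Rightarrow> bool" where
  "residue_homogeneous C r p \<longleftrightarrow> (\<forall>j\<in>coeff_support p. j mod C = r mod C)"

definition residue_part :: "nat \<Rightarrow> nat \<Rightarrow> 'a::comm_monoid_add poly \<Rightarrow> 'a poly" where
  "residue_part C r p = (\<Sum>k\<le>degree p. monom (if k mod C = r mod C then coeff p k else 0) k)"

lemma degree_in_coeff_support: "p \<noteq> 0 \<Longrightarrow> degree p \<in> coeff_support p"
  by (simp add: coeff_support_def)

lemma le_degree_if_coeff_support: "j \<in> coeff_support p \<Longrightarrow> j \<le> degree p"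
  by (simp add: coeff_support_def le_degree)

lemma coeff_support_mult:
  fixes p q :: "'a::comm_semiring_0 poly"
  assumes "j \<in> coeff_support (p * q)"
  obtains i i' where "i \<in> coeff_support p" and "i' \<in> coeff_support q" and "j = i + i'"
proof -
  have "(\<Sum>i\<le>j. coeff p i * coeff q (j - i)) \<noteq> 0"
    using assms by (simp add: coeff_support_def coeff_mult)
  then obtain i where "i \<le> j" "coeff p i * coeff q (j - i) \<noteq> 0"
    by (meson atMost_iff sum.not_neutral_contains_not_neutral)
  then have "coeff p i \<noteq> 0" "coeff q (j - i) \<noteq> 0" using mult_not_zero by blast+
  then show thesis using that[of i "j - i"] \<open>i \<le> j\<close> by (simp add: coeff_support_def)
qed

lemma coeff_residue_part:
  "coeff (residue_part C r p) j = (if j mod C = r mod C then coeff p j else 0)"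
  by (auto simp: residue_part_def coeff_sum coeff_monom sum.delta' coeff_eq_0)

lemma residue_part_add: "residue_part C r (p + q) = residue_part C r p + residue_part C r q"
  by (rule poly_eqI) (simp add: coeff_residue_part)

lemma residue_part_cong: "r mod C = r' mod C \<Longrightarrow> residue_part C r p = residue_part C r' p"
  by (rule poly_eqI) (simp add: coeff_residue_part)

lemma residue_part_id: "residue_homogeneous C r p \<Longrightarrow> residue_part C r p = p"
  by (rule poly_eqI) (auto simp: coeff_residue_part residue_homogeneous_def coeff_support_def)

lemma residue_homogeneous_residue_part: "residue_homogeneous C r (residue_part C r p)"
  by (simp add: residue_homogeneous_def coeff_support_def coeff_residue_part)

lemma residue_homogeneous_degree:
  "residue_homogeneous C r p \<Longrightarrow> residue_homogeneous C (degree p) p"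
  by (cases "p = 0") (auto simp: residue_homogeneous_def coeff_support_def)

lemma residue_part_mult:
  fixes g p :: "'a::comm_semiring_0 poly"
  assumes g: "residue_homogeneous C s g"
  shows "residue_part C (r + s) (g * p) = g * residue_part C r p"
proof (rule poly_eqI)
  fix n
  have "coeff g i * (if (n - i) mod C = r mod C then coeff p (n - i) else 0)
      = (if n mod C = (r + s) mod C then coeff g i * coeff p (n - i) else 0)" if "i \<le> n" for i
  proof (cases "coeff g i = 0")
    case False
    then have "i mod C = s mod C"
      using g by (simp add: residue_homogeneous_def coeff_support_def)
    then have "int C dvd int i - int s"
      by (simp only: nat_mod_eq_iff_int_dvd)
    then have "int C dvd int (n - i) - int r \<longleftrightarrow>
        int C dvd (int (n - i) - int r) + (int i - int s)"
      by (rule dvd_add_left_iff[symmetric])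
    also have "(int (n - i) - int r) + (int i - int s) = int n - int (r + s)"
      using that by simp
    finally have "int C dvd int (n - i) - int r \<longleftrightarrow> int C dvd int n - int (r + s)" .
    then have "(n - i) mod C = r mod C \<longleftrightarrow> n mod C = (r + s) mod C"
      by (simp only: nat_mod_eq_iff_int_dvd)
    then show ?thesis by simp
  qed simp
  then have "coeff (g * residue_part C r p) n
      = (\<Sum>i\<le>n. if n mod C = (r + s) mod C then coeff g i * coeff p (n - i) else 0)"
    unfolding coeff_mult coeff_residue_part by (intro sum.cong) simp_all
  then show "coeff (residue_part C (r + s) (g * p)) n = coeff (g * residue_part C r p) n"
    by (cases "n mod C = (r + s) mod C") (simp_all add: coeff_residue_part coeff_mult)
qed

lemma residue_homogeneous_eq_monom_pcompose:
  fixes p :: "'a::comm_semiring_1 poly"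
  assumes C: "C > 0" and r: "r < C" and p: "residue_homogeneous C r p"
  obtains q where "p = monom 1 r * pcompose q (monom 1 C)"
proof
  define q where "q = Abs_poly (\<lambda>k. coeff p (r + k * C))"
  have "\<forall>\<^sub>\<infinity>k. coeff p (r + k * C) = 0"
    unfolding MOST_nat
  proof (intro exI allI impI)
    fix k assume "degree p < k"
    moreover have "k \<le> r + k * C" using C by (simp add: trans_le_add2)
    ultimately show "coeff p (r + k * C) = 0" by (simp add: coeff_eq_0)
  qed
  then have coeff_q: "coeff q k = coeff p (r + k * C)" for k
    unfolding q_def by (simp add: Abs_poly_inverse)
  show "p = monom 1 r * pcompose q (monom 1 C)"
  proof (rule poly_eqI)
    fix j
    show "coeff p j = coeff (monom 1 r * pcompose q (monom 1 C)) j"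
    proof (cases "coeff p j = 0")
      case True
      have "coeff p (r + (j - r) div C * C) = 0" if "r \<le> j" "C dvd j - r"
        using that True by (simp add: algebra_simps)
      with True show ?thesis
        by (simp add: coeff_monom_mult coeff_pcompose_monom[OF C] coeff_q)
    next
      case False
      then have "j mod C = r" using p r by (simp add: residue_homogeneous_def coeff_support_def)
      then have "r \<le> j" "j - r = C * (j div C)"
        using mod_less_eq_dividend[of j C] minus_mod_eq_mult_div[of j C] by simp_all
      then have "r + j div C * C = j" by (simp add: mult.commute)
      with \<open>j - r = C * (j div C)\<close> show ?thesis
        using C by (simp add: coeff_monom_mult coeff_pcompose_monom coeff_q)
    qed
  qed
qed

text \<open>Project a Bezout decomposition \<open>f = g * (u * f + h * k) + h * ((v * f) mod g)\<close>
  onto the residue classes of \<open>f\<close>; this keeps the degree bound on the second factor.\<close>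

lemma bezout_residue_decomposition:
  fixes f g h u v :: "'k::field poly"
  assumes C: "C > 0" and "g \<noteq> 0" and bezout: "u * g + v * h = 1"
    and g: "residue_homogeneous C (degree g) g" and h: "residue_homogeneous C b h"
    and f: "residue_homogeneous C (p + b) f"
  obtains a r where "f = g * a + h * r" and "residue_homogeneous C (degree a) a"
    and "residue_homogeneous C p r" and "\<forall>j\<in>coeff_support r. j < degree g"
proof -
  define k where "k = (v * f) div g"
  define r0 where "r0 = (v * f) mod g"
  define X where "X = u * f + h * k"
  have vf: "v * f = g * k + r0" unfolding k_def r0_def by simp
  have "f = (u * g + v * h) * f" using bezout by simp
  also have "\<dots> = g * (u * f) + h * (v * f)" by (simp add: algebra_simps)
  also have "\<dots> = g * X + h * r0" unfolding vf X_def by (simp add: algebra_simps)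
  finally have f_eq: "f = g * X + h * r0" .
  define a' where "a' = p + b + (C - 1) * degree g"
  have "a' + degree g = p + b + degree g * C"
    using C unfolding a'_def by (cases C) (simp_all add: algebra_simps)
  then have a': "(a' + degree g) mod C = (p + b) mod C" by simp
  have "f = residue_part C (p + b) f" using f by (simp add: residue_part_id)
  also have "\<dots> = residue_part C (a' + degree g) (g * X) + residue_part C (p + b) (h * r0)"
    by (simp add: f_eq residue_part_add residue_part_cong[OF a'])
  also have "\<dots> = g * residue_part C a' X + h * residue_part C p r0"
    using g h by (simp add: residue_part_mult)
  finally have "f = g * residue_part C a' X + h * residue_part C p r0" .
  moreover have "residue_homogeneous C (degree (residue_part C a' X)) (residue_part C a' X)"
    by (rule residue_homogeneous_degree[OF residue_homogeneous_residue_part])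
  moreover have "\<forall>j\<in>coeff_support (residue_part C p r0). j < degree g"
  proof
    fix j assume "j \<in> coeff_support (residue_part C p r0)"
    then have "j \<in> coeff_support r0" "r0 \<noteq> 0"
      by (auto simp: coeff_support_def coeff_residue_part split: if_splits)
    then show "j < degree g"
      using le_degree_if_coeff_support degree_mod_less[OF \<open>g \<noteq> 0\<close>] unfolding r0_def
      by (meson order.strict_trans1)
  qed
  ultimately show thesis using that residue_homogeneous_residue_part by blast
qed

section \<open>Specialization to the variable \<open>y\<close>\<close>

text \<open>\<open>ypoly y P\<close> is the image of \<open>P\<close> under the substitution \<open>x\<^sub>k \<mapsto> 1\<close> for all variables other
  than \<open>y\<close>.\<close>

definition ypoly :: "'m \<Rightarrow> (('m \<Rightarrow>\<^sub>0 nat) \<Rightarrow>\<^sub>0 'k::comm_semiring_1) \<Rightarrow> 'k poly" where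
  "ypoly y P = (\<Sum>e\<in>Poly_Mapping.keys P. monom (Poly_Mapping.lookup P e) (Poly_Mapping.lookup e y))"

lemma ypoly_superset:
  assumes "finite S" "Poly_Mapping.keys P \<subseteq> S"
  shows "ypoly y P = (\<Sum>e\<in>S. monom (Poly_Mapping.lookup P e) (Poly_Mapping.lookup e y))"
  unfolding ypoly_def by (rule sum.mono_neutral_left) (use assms in \<open>auto simp: in_keys_iff\<close>)

lemma ypoly_zero [simp]: "ypoly y 0 = 0"
  by (simp add: ypoly_def)

lemma ypoly_single [simp]:
  "ypoly y (Poly_Mapping.single e a) = monom a (Poly_Mapping.lookup e y)"
  by (simp add: ypoly_def)

lemma ypoly_add: "ypoly y (P + Q) = ypoly y P + ypoly y Q"
proof -
  define S where "S = Poly_Mapping.keys P \<union> Poly_Mapping.keys Q"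
  have "finite S" by (simp add: S_def)
  then show ?thesis
    using ypoly_superset[of S "P + Q" y] ypoly_superset[of S P y] ypoly_superset[of S Q y]
      keys_add[of P Q]
    by (simp add: S_def lookup_add add_monom[symmetric] sum.distrib)
qed

lemma ypoly_sum: "ypoly y (sum f A) = (\<Sum>a\<in>A. ypoly y (f a))"
  by (induction A rule: infinite_finite_induct) (auto simp: ypoly_add)

lemma poly_mapping_sum_single:
  "P = (\<Sum>e\<in>Poly_Mapping.keys P. Poly_Mapping.single e (Poly_Mapping.lookup P e))"
  by (rule poly_mapping_eqI) (simp add: lookup_sum lookup_single when_def sum.delta in_keys_iff)

lemma ypoly_mult: "ypoly y (P * Q) = ypoly y P * ypoly y Q"
proof -
  let ?s = "\<lambda>e. Poly_Mapping.single e (Poly_Mapping.lookup P e)"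
  let ?t = "\<lambda>f. Poly_Mapping.single f (Poly_Mapping.lookup Q f)"
  have "P * Q = (\<Sum>e\<in>Poly_Mapping.keys P. ?s e) * (\<Sum>f\<in>Poly_Mapping.keys Q. ?t f)"
    using poly_mapping_sum_single[of P] poly_mapping_sum_single[of Q] by simp
  also have "\<dots> = (\<Sum>e\<in>Poly_Mapping.keys P. \<Sum>f\<in>Poly_Mapping.keys Q. ?s e * ?t f)"
    by (rule sum_product)
  finally have "ypoly y (P * Q)
      = (\<Sum>e\<in>Poly_Mapping.keys P. \<Sum>f\<in>Poly_Mapping.keys Q. ypoly y (?s e) * ypoly y (?t f))"
    by (simp add: ypoly_sum mult_single lookup_add mult_monom)
  also have "\<dots> = ypoly y P * ypoly y Q"
    by (simp only: ypoly_single lookup_single_eq) (simp add: ypoly_def sum_product)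
  finally show ?thesis .
qed

lemma ypoly_one [simp]: "ypoly y 1 = 1"
  by (simp flip: single_one)

lemma coeff_ypoly:
  "coeff (ypoly y P) j
    = (\<Sum>e\<in>{e\<in>Poly_Mapping.keys P. Poly_Mapping.lookup e y = j}. Poly_Mapping.lookup P e)"
  by (simp add: ypoly_def coeff_sum coeff_monom sum.inter_filter)

lemma degree_ypoly_unit:
  fixes P :: "('m \<Rightarrow>\<^sub>0 nat) \<Rightarrow>\<^sub>0 'k::field"
  assumes "P dvd 1"
  shows "degree (ypoly y P) = 0"
proof -
  obtain Q where "1 = P * Q" using assms by (auto elim: dvdE)
  then have "ypoly y P * ypoly y Q = 1" by (metis ypoly_mult ypoly_one)
  then show ?thesis using is_unit_iff_degree by (metis dvdI mult_not_zero one_neq_zero)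
qed

lemma degree_ypoly_common_divisor:
  fixes G H D :: "('m \<Rightarrow>\<^sub>0 nat) \<Rightarrow>\<^sub>0 'k::field"
  assumes "coprime_poly G H" and "D dvd G" and "D dvd H"
  shows "degree (ypoly y D) = 0"
  using assms by (simp add: coprime_poly_def degree_ypoly_unit)

lemma monic_in_imp_ypoly:
  fixes G :: "('m \<Rightarrow>\<^sub>0 nat) \<Rightarrow>\<^sub>0 'k::field"
  assumes "monic_in y G"
  obtains d where "lead_coeff (ypoly y G) = 1" and "degree (ypoly y G) = d"
    and "Poly_Mapping.single y d \<in> Poly_Mapping.keys G"
proof -
  obtain d where lookup_d: "Poly_Mapping.lookup G (Poly_Mapping.single y d) = 1"
    and keys_G: "\<And>e. e \<in> Poly_Mapping.keys G \<Longrightarrow>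
      Poly_Mapping.lookup e y \<le> d \<and> (Poly_Mapping.lookup e y = d \<longrightarrow> e = Poly_Mapping.single y d)"
    using assms unfolding monic_in_def by blast
  have d_key: "Poly_Mapping.single y d \<in> Poly_Mapping.keys G" using lookup_d by (simp add: in_keys_iff)
  have "{e\<in>Poly_Mapping.keys G. Poly_Mapping.lookup e y = d} = {Poly_Mapping.single y d}"
  proof (intro equalityI subsetI)
    fix e assume "e \<in> {e\<in>Poly_Mapping.keys G. Poly_Mapping.lookup e y = d}"
    then show "e \<in> {Poly_Mapping.single y d}" using keys_G by simp
  qed (use d_key in simp)
  then have coeff_d: "coeff (ypoly y G) d = 1" using lookup_d by (simp add: coeff_ypoly)
  have "coeff (ypoly y G) j = 0" if "d < j" for j
  proof -
    have "{e\<in>Poly_Mapping.keys G. Poly_Mapping.lookup e y = j} = {}"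
      using keys_G that by (force simp del: lookup_single_eq)
    then show ?thesis unfolding coeff_ypoly by (simp only: sum.empty)
  qed
  then have "degree (ypoly y G) \<le> d" by (meson degree_le not_le)
  moreover have "d \<le> degree (ypoly y G)" using coeff_d by (simp add: le_degree)
  ultimately show thesis using that coeff_d d_key by simp
qed

section \<open>Weights and weight classes\<close>

lemma rvec_nth [simp]: "rvec v $ j = real_of_int (v $ j)"
  by (simp add: rvec_def)

lemma rvec_uminus: "rvec (- v) = - rvec v"
  by (simp add: vec_eq_iff)

lemma rvec_inner: "rvec a \<bullet> rvec b = real_of_int (iinner a b)"
  by (simp add: inner_vec_def iinner_def)

lemma iinner_add: "iinner a (b + d) = iinner a b + iinner a d"
  by (simp add: iinner_def distrib_left sum.distrib)

lemma iinner_diff: "iinner a (b - d) = iinner a b - iinner a d"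
  by (simp add: iinner_def right_diff_distrib sum_subtractf)

lemma iinner_smult: "iinner a (t *s b) = t * iinner a b"
  by (simp add: iinner_def sum_distrib_left algebra_simps)

lemma iinner_uminus: "iinner a (- b) = - iinner a b"
  by (simp add: iinner_def sum_negf)

lemma iinner_commute: "iinner a b = iinner b a"
  by (simp add: iinner_def mult.commute)

lemma weight_add: "weight n \<xi> (a + b) = wadd (weight n \<xi> a) (weight n \<xi> b)"
  by (auto simp: weight_def wadd_def iinner_add)

lemma wadd_assoc: "wadd (wadd a b) d = wadd a (wadd b d)"
  by (simp add: wadd_def add.assoc)

lemma wadd_left_commute: "wadd a (wadd b d) = wadd b (wadd a d)"
  by (simp add: wadd_def add.left_commute)

lemma wadd_left_cancel: "wadd a b = wadd a b' \<longleftrightarrow> b = b'"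
  by (auto simp: wadd_def fun_eq_iff)

lemma wadd_commute: "wadd a b = wadd b a"
  by (simp add: wadd_def add.commute)

lemma wadd_zero_left: "wadd (\<lambda>_. 0) a = a"
  by (simp add: wadd_def)

lemma expvec_nth [simp]: "expvec e $ j = int (Poly_Mapping.lookup e j)"
  by (simp add: expvec_def)

lemma expvec_add: "expvec (e + f) = expvec e + expvec f"
  by (simp add: expvec_def vec_eq_iff lookup_add)

lemma expvec_inject: "expvec e = expvec f \<longleftrightarrow> e = f"
  by (auto intro: poly_mapping_eqI simp: expvec_def vec_eq_iff)

lemma expvec_surj_nonneg:
  assumes "\<And>j. 0 \<le> u $ j"
  obtains e where "expvec e = u"
proof
  show "expvec (Abs_poly_mapping (\<lambda>j. nat (u $ j))) = u"
    using assms by (simp add: expvec_def vec_eq_iff)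
qed

lemma Rw_zero: "0 \<in> Rw n \<xi> v"
  by (simp add: Rw_def)

lemma Rw_add: "P \<in> Rw n \<xi> v \<Longrightarrow> Q \<in> Rw n \<xi> v \<Longrightarrow> P + Q \<in> Rw n \<xi> v"
  using keys_add[of P Q] unfolding Rw_def by auto

lemma Rw_mult: "P \<in> Rw n \<xi> v \<Longrightarrow> Q \<in> Rw n \<xi> v' \<Longrightarrow> P * Q \<in> Rw n \<xi> (wadd v v')"
  using keys_mult[of P Q] unfolding Rw_def by (auto simp: expvec_add weight_add)

lemma Rw_sum: "(\<And>a. a \<in> A \<Longrightarrow> f a \<in> Rw n \<xi> v) \<Longrightarrow> sum f A \<in> Rw n \<xi> v"
  by (induction A rule: infinite_finite_induct) (auto simp: Rw_zero Rw_add)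

lemma Rw_single:
  "weight n \<xi> (expvec e) = v \<Longrightarrow> Poly_Mapping.single e a \<in> Rw n \<xi> v"
  by (simp add: Rw_def)

lemma weight_expvec_if_in_keys:
  "P \<in> Rw n \<xi> v \<Longrightarrow> e \<in> Poly_Mapping.keys P \<Longrightarrow> weight n \<xi> (expvec e) = v"
  by (simp add: Rw_def)

lemma sum_of_multiples_subset_Rw:
  assumes G: "G \<in> Rw n \<xi> w" and H: "H \<in> Rw n \<xi> z"
  shows "{G * A + H * B | A B. A \<in> Rw n \<xi> (wadd z i) \<and> B \<in> Rw n \<xi> (wadd w i)}
    \<subseteq> Rw n \<xi> (wadd (wadd w z) i)"
proof
  fix X assume "X \<in> {G * A + H * B | A B. A \<in> Rw n \<xi> (wadd z i) \<and> B \<in> Rw n \<xi> (wadd w i)}"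
  then obtain A B where X: "X = G * A + H * B" and A: "A \<in> Rw n \<xi> (wadd z i)"
    and B: "B \<in> Rw n \<xi> (wadd w i)" by blast
  have "G * A \<in> Rw n \<xi> (wadd (wadd w z) i)" using Rw_mult[OF G A] by (simp add: wadd_assoc)
  moreover have "H * B \<in> Rw n \<xi> (wadd (wadd w z) i)"
    using Rw_mult[OF H B] by (simp add: wadd_left_commute wadd_assoc wadd_commute)
  ultimately show "X \<in> Rw n \<xi> (wadd (wadd w z) i)" unfolding X by (rule Rw_add)
qed

section \<open>The grading along a descendant edge\<close>

locale edge_grading =
  fixes n :: nat and \<xi> :: "nat \<Rightarrow> int ^ 'm::finite" and y :: 'm and c :: "int ^ 'm"
  assumes c_y_neg: "c $ y < 0"
    and c_nonneg: "\<And>k. k \<noteq> y \<Longrightarrow> 0 \<le> c $ k"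
    and xi_orth: "\<And>i. i < n \<Longrightarrow> iinner (\<xi> i) c = 0"
    and xi_kernel: "\<And>u. (\<And>i. i < n \<Longrightarrow> iinner (\<xi> i) u = 0) \<Longrightarrow> \<exists>t::int. u = t *s c"
begin

definition period :: nat where
  "period = nat (- c $ y)"

definition wt :: "('m \<Rightarrow>\<^sub>0 nat) \<Rightarrow> nat \<Rightarrow> int" where
  "wt e = weight n \<xi> (expvec e)"

definition ydegs :: "(nat \<Rightarrow> int) \<Rightarrow> nat set" where
  "ydegs v = {j. \<exists>e. wt e = v \<and> Poly_Mapping.lookup e y = j}"

lemma period_pos: "period > 0"
  using c_y_neg by (simp add: period_def)

lemma int_period: "int period = - c $ y"
  using c_y_neg by (simp add: period_def)

lemma wt_add: "wt (e + f) = wadd (wt e) (wt f)"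
  by (simp add: wt_def expvec_add weight_add)

lemma weight_add_multiple_c: "weight n \<xi> (u + t *s c) = weight n \<xi> u"
  by (auto simp: weight_def iinner_add iinner_smult xi_orth)

lemma weight_eq_imp_multiple_c:
  assumes "weight n \<xi> u1 = weight n \<xi> u2"
  obtains t where "u1 - u2 = t *s c"
proof -
  have "iinner (\<xi> i) (u1 - u2) = 0" if "i < n" for i
    using fun_cong[OF assms, of i] that by (simp add: weight_def iinner_diff)
  then show thesis using xi_kernel that by blast
qed

lemma weight_eq_imp_period_dvd:
  assumes "weight n \<xi> u1 = weight n \<xi> u2"
  shows "int period dvd u1 $ y - u2 $ y"
proof -
  obtain t where "u1 - u2 = t *s c" using weight_eq_imp_multiple_c[OF assms] .
  then have "u1 $ y - u2 $ y = t * c $ y"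
    by (metis vector_minus_component vector_smult_component)
  then have "u1 $ y - u2 $ y = int period * (- t)" using int_period by simp
  then show ?thesis by (rule dvdI)
qed

lemma wt_eq_imp_eq:
  assumes "wt e = wt f" and "Poly_Mapping.lookup e y = Poly_Mapping.lookup f y"
  shows "e = f"
proof -
  obtain t where t: "expvec e - expvec f = t *s c"
    using weight_eq_imp_multiple_c assms(1) unfolding wt_def by blast
  then have "t * c $ y = 0"
    using assms(2) by (metis diff_self expvec_nth vector_minus_component vector_smult_component)
  then have "expvec e = expvec f" using t c_y_neg by simp
  then show ?thesis by (simp add: expvec_inject)
qed

lemma ydegs_cong:
  assumes "j \<in> ydegs v" and "j' \<in> ydegs v"
  shows "j mod period = j' mod period"
proof -
  obtain e e' where "wt e = v" "Poly_Mapping.lookup e y = j" "wt e' = v" "Poly_Mapping.lookup e' y = j'"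
    using assms unfolding ydegs_def by blast
  then have "int period dvd int j - int j'"
    using weight_eq_imp_period_dvd[of "expvec e" "expvec e'"] by (simp add: wt_def)
  then show ?thesis by (simp only: nat_mod_eq_iff_int_dvd)
qed

text \<open>Adding multiples of \<open>c\<close> keeps the weight and lowers the \<open>y\<close>-degree by multiples of
  the period, without making any other exponent negative.\<close>

lemma ydegs_downward_closed:
  assumes j: "j \<in> ydegs v" and "j' \<le> j" and "j' mod period = j mod period"
  shows "j' \<in> ydegs v"
proof -
  obtain e where e: "wt e = v" "Poly_Mapping.lookup e y = j" using j by (auto simp: ydegs_def)
  obtain s where s: "j = j' + period * s" using mod_eq_nat2E assms(2,3) by metis
  define u where "u = expvec e + int s *s c"
  have "u $ y = int j'" using s int_period by (simp add: u_def e algebra_simps)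
  moreover have "0 \<le> u $ k" if "k \<noteq> y" for k
    using c_nonneg[OF that] by (simp add: u_def)
  ultimately have "0 \<le> u $ k" for k by (cases "k = y") auto
  then obtain e' where e': "expvec e' = u" by (rule expvec_surj_nonneg)
  have "wt e' = v" using e e' by (simp add: wt_def u_def weight_add_multiple_c)
  moreover have "int (Poly_Mapping.lookup e' y) = u $ y" by (simp only: e' flip: expvec_nth)
  then have "Poly_Mapping.lookup e' y = j'" using \<open>u $ y = int j'\<close> by simp
  ultimately show ?thesis unfolding ydegs_def by blast
qed

lemma ydegs_add:
  assumes "j \<in> ydegs v" and "j' \<in> ydegs v'"
  shows "j + j' \<in> ydegs (wadd v v')"
proof -
  obtain e e' where "wt e = v" "Poly_Mapping.lookup e y = j" "wt e' = v'" "Poly_Mapping.lookup e' y = j'"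
    using assms unfolding ydegs_def by blast
  then have "wt (e + e') = wadd v v'" "Poly_Mapping.lookup (e + e') y = j + j'"
    by (simp_all add: wt_add lookup_add)
  then show ?thesis unfolding ydegs_def by blast
qed

lemma ydegs_diff:
  assumes j: "j \<in> ydegs (wadd (wt (Poly_Mapping.single y d)) v)" and "d \<le> j"
  shows "j - d \<in> ydegs v"
proof -
  obtain e where e: "wt e = wadd (wt (Poly_Mapping.single y d)) v" "Poly_Mapping.lookup e y = j"
    using j by (auto simp: ydegs_def)
  define f where "f = e - Poly_Mapping.single y d"
  have "e = Poly_Mapping.single y d + f"
    by (rule poly_mapping_eqI) (use e \<open>d \<le> j\<close> in \<open>auto simp: f_def lookup_add lookup_minus
        lookup_single when_def\<close>)
  then have "wt f = v" using e(1) by (metis wt_add wadd_left_cancel)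
  moreover have "Poly_Mapping.lookup f y = j - d" using e by (simp add: f_def lookup_minus)
  ultimately show ?thesis unfolding ydegs_def by blast
qed

lemma ydegs_single: "j \<in> ydegs (wt (Poly_Mapping.single y j))"
  by (auto simp: ydegs_def)

lemma Rw_single_wt: "wt e = v \<Longrightarrow> Poly_Mapping.single e a \<in> Rw n \<xi> v"
  by (simp add: Rw_single wt_def)

lemma wt_if_in_keys: "P \<in> Rw n \<xi> v \<Longrightarrow> e \<in> Poly_Mapping.keys P \<Longrightarrow> wt e = v"
  by (simp add: weight_expvec_if_in_keys wt_def)

lemma coeff_support_ypoly:
  assumes "P \<in> Rw n \<xi> v"
  shows "coeff_support (ypoly y P) \<subseteq> ydegs v"
proof
  fix j assume "j \<in> coeff_support (ypoly y P)"
  then obtain e where "e \<in> Poly_Mapping.keys P" "Poly_Mapping.lookup e y = j"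
    unfolding coeff_support_def coeff_ypoly by (metis (mono_tags, lifting) mem_Collect_eq sum.neutral)
  then show "j \<in> ydegs v" using wt_if_in_keys[OF assms] by (auto simp: ydegs_def)
qed

lemma residue_homogeneous_ypoly_ydegs:
  assumes "P \<in> Rw n \<xi> v" and "j \<in> ydegs v"
  shows "residue_homogeneous period j (ypoly y P)"
  using coeff_support_ypoly[OF assms(1)] ydegs_cong assms(2)
  unfolding residue_homogeneous_def by blast

lemma residue_homogeneous_ypoly:
  assumes "P \<in> Rw n \<xi> v"
  shows "residue_homogeneous period (degree (ypoly y P)) (ypoly y P)"
proof (cases "ypoly y P = 0")
  case False
  then show ?thesis
    using residue_homogeneous_ypoly_ydegs[OF assms] coeff_support_ypoly[OF assms]
      degree_in_coeff_support by blast
qed (simp add: residue_homogeneous_def coeff_support_def)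

lemma coeff_support_mult_ydegs:
  assumes "coeff_support p \<subseteq> ydegs v" and "coeff_support q \<subseteq> ydegs v'"
  shows "coeff_support (p * q) \<subseteq> ydegs (wadd v v')"
proof
  fix j assume "j \<in> coeff_support (p * q)"
  then obtain i i' where "i \<in> coeff_support p" "i' \<in> coeff_support q" "j = i + i'"
    by (rule coeff_support_mult)
  then show "j \<in> ydegs (wadd v v')" using assms ydegs_add by blast
qed

lemma lookup_eq_coeff_ypoly:
  assumes P: "P \<in> Rw n \<xi> v" and e: "wt e = v"
  shows "Poly_Mapping.lookup P e = coeff (ypoly y P) (Poly_Mapping.lookup e y)"
proof -
  have "{e'\<in>Poly_Mapping.keys P. Poly_Mapping.lookup e' y = Poly_Mapping.lookup e y}
        = (if e \<in> Poly_Mapping.keys P then {e} else {})"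
    using wt_eq_imp_eq wt_if_in_keys[OF P] e by auto
  then show ?thesis unfolding coeff_ypoly by (auto simp: in_keys_iff)
qed

lemma inj_on_ypoly_Rw: "inj_on (ypoly y) (Rw n \<xi> v)"
proof (rule inj_onI)
  fix P Q assume P: "P \<in> Rw n \<xi> v" and Q: "Q \<in> Rw n \<xi> v" and eq: "ypoly y P = ypoly y Q"
  show "P = Q"
  proof (rule poly_mapping_eqI)
    fix e
    show "Poly_Mapping.lookup P e = Poly_Mapping.lookup Q e"
    proof (cases "wt e = v")
      case True
      then show ?thesis using lookup_eq_coeff_ypoly P Q eq by metis
    next
      case False
      then show ?thesis using wt_if_in_keys P Q by (metis in_keys_iff)
    qed
  qed
qed

lemma ypoly_image_Rw:
  "ypoly y ` (Rw n \<xi> v :: (('m \<Rightarrow>\<^sub>0 nat) \<Rightarrow>\<^sub>0 'k::field) set) = {p. coeff_support p \<subseteq> ydegs v}"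
proof (intro equalityI subsetI)
  fix p :: "'k poly" assume "p \<in> {p. coeff_support p \<subseteq> ydegs v}"
  then have "\<exists>e. wt e = v \<and> Poly_Mapping.lookup e y = j" if "coeff p j \<noteq> 0" for j
    using that by (auto simp: coeff_support_def ydegs_def)
  then obtain E where E: "\<And>j. coeff p j \<noteq> 0 \<Longrightarrow> wt (E j) = v \<and> Poly_Mapping.lookup (E j) y = j"
    by metis
  define P :: "('m \<Rightarrow>\<^sub>0 nat) \<Rightarrow>\<^sub>0 'k" where "P = (\<Sum>j\<le>degree p. Poly_Mapping.single (E j) (coeff p j))"
  have "P \<in> Rw n \<xi> v"
    unfolding P_def by (rule Rw_sum) (metis E Rw_single_wt single_zero Rw_zero)
  have "ypoly y P = (\<Sum>j\<le>degree p. monom (coeff p j) j)"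
    unfolding P_def ypoly_sum by (intro sum.cong refl) (metis E ypoly_single monom_eq_0)
  then have "ypoly y P = p" by (simp add: poly_as_sum_of_monoms)
  with \<open>P \<in> Rw n \<xi> v\<close> show "p \<in> ypoly y ` Rw n \<xi> v" by blast
qed (use coeff_support_ypoly in auto)

definition ypow :: "nat \<Rightarrow> ('m \<Rightarrow>\<^sub>0 nat) \<Rightarrow>\<^sub>0 'k::field" where
  "ypow r = Poly_Mapping.single (Poly_Mapping.single y r) 1"

lemma ypow_Rw: "ypow r \<in> Rw n \<xi> (wt (Poly_Mapping.single y r))"
  unfolding ypow_def by (rule Rw_single_wt) simp

lemma ypoly_ypow [simp]: "ypoly y (ypow r) = monom 1 r"
  by (simp add: ypow_def)

lemma ypow_add: "ypow (a + b) = ypow a * ypow b"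
  by (simp add: ypow_def mult_single single_add)

lemma ypow_dvd:
  assumes "r \<le> s"
  shows "ypow r dvd ypow s"
proof (rule dvdI)
  show "ypow s = ypow r * ypow (s - r)" using ypow_add[of r "s - r"] assms by simp
qed

lemma wt_single_y_add:
  "wt (Poly_Mapping.single y (a + b)) = wadd (wt (Poly_Mapping.single y a)) (wt (Poly_Mapping.single y b))"
  by (simp add: single_add wt_add)

text \<open>The homogenization of \<open>q(y ^ period)\<close> in the weight of \<open>y ^ (period * degree q)\<close>.\<close>

definition lift_pcompose :: "'k::field poly \<Rightarrow> ('m \<Rightarrow>\<^sub>0 nat) \<Rightarrow>\<^sub>0 'k" where
  "lift_pcompose q = (SOME P. P \<in> Rw n \<xi> (wt (Poly_Mapping.single y (period * degree q)))
      \<and> ypoly y P = pcompose q (monom 1 period))"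

lemma lift_pcompose:
  "lift_pcompose q \<in> Rw n \<xi> (wt (Poly_Mapping.single y (period * degree q)))"
  "ypoly y (lift_pcompose q) = pcompose q (monom 1 period)"
proof -
  let ?v = "wt (Poly_Mapping.single y (period * degree q))"
  have "coeff_support (pcompose q (monom 1 period)) \<subseteq> ydegs ?v"
  proof
    fix j assume "j \<in> coeff_support (pcompose q (monom 1 period))"
    then obtain k where "j = period * k" "coeff q k \<noteq> 0"
      using period_pos
      by (auto simp: coeff_support_def coeff_pcompose_monom[OF period_pos] split: if_splits)
    then have "j \<le> period * degree q" "j mod period = (period * degree q) mod period"
      by (simp_all add: le_degree)
    then show "j \<in> ydegs ?v" by (intro ydegs_downward_closed[OF ydegs_single])
  qed
  then have "\<exists>P. P \<in> Rw n \<xi> ?v \<and> ypoly y P = pcompose q (monom 1 period)"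
    using ypoly_image_Rw by (metis (no_types, lifting) imageE mem_Collect_eq)
  then show "lift_pcompose q \<in> Rw n \<xi> ?v" "ypoly y (lift_pcompose q) = pcompose q (monom 1 period)"
    unfolding lift_pcompose_def by (metis (mono_tags, lifting) someI_ex)+
qed

lemma lift_pcompose_mult:
  fixes q1 q2 :: "'k::field poly"
  assumes "q1 \<noteq> 0" "q2 \<noteq> 0"
  shows "lift_pcompose (q1 * q2) = lift_pcompose q1 * lift_pcompose q2"
proof (rule inj_onD[OF inj_on_ypoly_Rw])
  show "lift_pcompose (q1 * q2) \<in> Rw n \<xi> (wt (Poly_Mapping.single y (period * degree (q1 * q2))))"
    by (rule lift_pcompose)
  show "lift_pcompose q1 * lift_pcompose q2
      \<in> Rw n \<xi> (wt (Poly_Mapping.single y (period * degree (q1 * q2))))"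
    using Rw_mult[OF lift_pcompose(1) lift_pcompose(1)] assms
    by (simp add: degree_mult_eq distrib_left wt_single_y_add)
  show "ypoly y (lift_pcompose (q1 * q2)) = ypoly y (lift_pcompose q1 * lift_pcompose q2)"
    by (simp add: ypoly_mult lift_pcompose pcompose_mult)
qed

lemma lift_pcompose_X: "lift_pcompose [:0, 1:] = (ypow period :: ('m \<Rightarrow>\<^sub>0 nat) \<Rightarrow>\<^sub>0 'k::field)"
proof (rule inj_onD[OF inj_on_ypoly_Rw])
  show "lift_pcompose [:0, 1::'k:] \<in> Rw n \<xi> (wt (Poly_Mapping.single y period))"
    using lift_pcompose(1)[of "[:0, 1::'k:]"] by simp
  show "ypoly y (lift_pcompose [:0, 1::'k:]) = ypoly y (ypow period :: ('m \<Rightarrow>\<^sub>0 nat) \<Rightarrow>\<^sub>0 'k)"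
    by (simp add: lift_pcompose pcompose_pCons)
qed (rule ypow_Rw)

text \<open>Dividing by the top monomial leaves a monomial without \<open>y\<close>, which \<open>ypoly\<close> maps to 1.\<close>

lemma Rw_eq_monomial_mult:
  fixes P Q :: "('m \<Rightarrow>\<^sub>0 nat) \<Rightarrow>\<^sub>0 'k::field"
  assumes P: "P \<in> Rw n \<xi> v" and Q: "Q \<in> Rw n \<xi> (wt (Poly_Mapping.single y (degree (ypoly y P))))"
    and eq: "ypoly y Q = ypoly y P" and P0: "ypoly y P \<noteq> 0"
  obtains e where "P = Poly_Mapping.single e 1 * Q"
proof -
  let ?d = "degree (ypoly y P)"
  have "coeff (ypoly y P) ?d \<noteq> 0" using P0 by simp
  then obtain eP where eP: "eP \<in> Poly_Mapping.keys P" "Poly_Mapping.lookup eP y = ?d"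
    unfolding coeff_ypoly by (metis (mono_tags, lifting) mem_Collect_eq sum.neutral)
  define e where "e = eP - Poly_Mapping.single y ?d"
  have e_y: "Poly_Mapping.lookup e y = 0" by (simp add: e_def lookup_minus eP)
  have "eP = e + Poly_Mapping.single y ?d"
    by (rule poly_mapping_eqI) (auto simp: e_def lookup_add lookup_minus lookup_single when_def eP)
  then have "wadd (wt e) (wt (Poly_Mapping.single y ?d)) = v"
    using wt_if_in_keys[OF P eP(1)] by (simp add: wt_add)
  then have "Poly_Mapping.single e 1 * Q \<in> Rw n \<xi> v"
    using Rw_mult[OF Rw_single_wt[OF refl] Q] by metis
  moreover have "ypoly y (Poly_Mapping.single e 1 * Q) = ypoly y P"
    by (simp add: ypoly_mult e_y eq)
  ultimately have "P = Poly_Mapping.single e 1 * Q"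
    using inj_onD[OF inj_on_ypoly_Rw] P by metis
  then show thesis by (rule that)
qed

lemma Rw_factorization:
  fixes P :: "('m \<Rightarrow>\<^sub>0 nat) \<Rightarrow>\<^sub>0 'k::field"
  assumes P: "P \<in> Rw n \<xi> v" and P0: "ypoly y P \<noteq> 0"
  defines "r \<equiv> degree (ypoly y P) mod period"
  obtains q e where "q \<noteq> 0" and "ypoly y P = monom 1 r * pcompose q (monom 1 period)"
    and "P = Poly_Mapping.single e 1 * ypow r * lift_pcompose q"
proof -
  have "residue_homogeneous period r (ypoly y P)"
    using residue_homogeneous_ypoly[OF P] by (simp add: r_def residue_homogeneous_def)
  moreover have "r < period" using period_pos by (simp add: r_def)
  ultimately obtain q where q: "ypoly y P = monom 1 r * pcompose q (monom 1 period)"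
    using residue_homogeneous_eq_monom_pcompose[OF period_pos] by blast
  have "q \<noteq> 0" using q P0 by auto
  then have "degree (ypoly y P) = r + period * degree q"
    using q period_pos by (simp add: degree_mult_eq degree_monom_eq degree_pcompose
        pcompose_eq_0_iff mult.commute)
  then have Q: "ypow r * lift_pcompose q \<in> Rw n \<xi> (wt (Poly_Mapping.single y (degree (ypoly y P))))"
    using Rw_mult[OF ypow_Rw lift_pcompose(1)] by (simp add: wt_single_y_add)
  have "ypoly y (ypow r * lift_pcompose q) = ypoly y P"
    by (simp add: ypoly_mult lift_pcompose q)
  then obtain e where "P = Poly_Mapping.single e 1 * (ypow r * lift_pcompose q)"
    by (rule Rw_eq_monomial_mult[OF P Q _ P0])
  then show thesis using that \<open>q \<noteq> 0\<close> q by (simp add: mult.assoc)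
qed

lemma Rw_divisors:
  fixes P :: "('m \<Rightarrow>\<^sub>0 nat) \<Rightarrow>\<^sub>0 'k::field"
  assumes P: "P \<in> Rw n \<xi> v" and P0: "ypoly y P \<noteq> 0"
  defines "r \<equiv> degree (ypoly y P) mod period"
  obtains q where "q \<noteq> 0" and "ypoly y P = monom 1 r * pcompose q (monom 1 period)"
    and "\<And>q'. q' dvd q \<Longrightarrow> lift_pcompose q' dvd P"
    and "0 < r \<or> poly q 0 = 0 \<Longrightarrow> ypow 1 dvd P"
proof -
  obtain q e where q: "q \<noteq> 0" "ypoly y P = monom 1 r * pcompose q (monom 1 period)"
    and P_eq: "P = Poly_Mapping.single e 1 * ypow r * lift_pcompose q"
    using Rw_factorization[OF P P0] unfolding r_def by blast
  have lift_dvd: "lift_pcompose q' dvd P" if "q' dvd q" for q'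
  proof -
    obtain q'' where "q = q' * q''" using \<open>q' dvd q\<close> by (auto elim: dvdE)
    with q(1) have "lift_pcompose q = lift_pcompose q' * lift_pcompose q''"
      by (simp add: lift_pcompose_mult)
    then show ?thesis unfolding P_eq by (metis dvd_mult dvd_triv_left)
  qed
  moreover have "ypow 1 dvd P" if "0 < r \<or> poly q 0 = 0"
    using that
  proof
    assume "0 < r"
    then have "ypow 1 dvd ypow r" by (simp add: ypow_dvd)
    then show ?thesis unfolding P_eq by (intro dvd_mult2 dvd_mult)
  next
    assume "poly q 0 = 0"
    then have "[:0, 1:] dvd q" using poly_eq_0_iff_dvd[of q 0] by simp
    then have "lift_pcompose [:0, 1:] dvd P" by (rule lift_dvd)
    then have "ypow period dvd P" by (simp only: lift_pcompose_X)
    moreover have "ypow 1 dvd ypow period" using period_pos by (simp add: ypow_dvd)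
    ultimately show ?thesis by (rule dvd_trans[rotated])
  qed
  ultimately show thesis by (rule that[OF q])
qed

lemma ypoly_coprime:
  fixes G H :: "('m \<Rightarrow>\<^sub>0 nat) \<Rightarrow>\<^sub>0 'k::field"
  assumes G: "G \<in> Rw n \<xi> w" and H: "H \<in> Rw n \<xi> z"
    and G0: "ypoly y G \<noteq> 0" and H0: "ypoly y H \<noteq> 0" and cop: "coprime_poly G H"
  shows "coprime (ypoly y G) (ypoly y H)"
proof -
  define rg where "rg = degree (ypoly y G) mod period"
  define rh where "rh = degree (ypoly y H) mod period"
  obtain qg where qg: "qg \<noteq> 0" "ypoly y G = monom 1 rg * pcompose qg (monom 1 period)"
    "\<And>q'. q' dvd qg \<Longrightarrow> lift_pcompose q' dvd G" "0 < rg \<or> poly qg 0 = 0 \<Longrightarrow> ypow 1 dvd G"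
    using Rw_divisors[OF G G0] unfolding rg_def by blast
  obtain qh where qh: "qh \<noteq> 0" "ypoly y H = monom 1 rh * pcompose qh (monom 1 period)"
    "\<And>q'. q' dvd qh \<Longrightarrow> lift_pcompose q' dvd H" "0 < rh \<or> poly qh 0 = 0 \<Longrightarrow> ypow 1 dvd H"
    using Rw_divisors[OF H H0] unfolding rh_def by blast
  have "coprime qg qh"
  proof (rule coprimeI)
    fix D assume "D dvd qg" "D dvd qh"
    then have "degree (ypoly y (lift_pcompose D :: ('m \<Rightarrow>\<^sub>0 nat) \<Rightarrow>\<^sub>0 'k)) = 0"
      using qg(3) qh(3) cop by (intro degree_ypoly_common_divisor[of G H])
    then have "degree D = 0" using period_pos by (simp add: lift_pcompose degree_pcompose degree_monom_eq)
    moreover have "D \<noteq> 0" using \<open>D dvd qg\<close> qg(1) by auto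
    ultimately show "is_unit D" by (simp add: is_unit_iff_degree)
  qed
  moreover have "degree (ypoly y (ypow 1 :: ('m \<Rightarrow>\<^sub>0 nat) \<Rightarrow>\<^sub>0 'k)) = 1"
    by (simp add: degree_monom_eq)
  then have "\<not> (ypow 1 dvd G \<and> ypow 1 dvd H)"
    using degree_ypoly_common_divisor[OF cop] by (metis one_neq_zero)
  ultimately show ?thesis
    using coprime_monom_pcompose[OF period_pos] qg(2,4) qh(2,4) by (metis gr0I)
qed

lemma coeff_support_subset_ydegs_weight:
  assumes u: "\<And>k. k \<noteq> y \<Longrightarrow> 0 \<le> u $ k" and p: "int period dvd int p - u $ y"
    and r: "residue_homogeneous period p r"
    and below: "\<And>j. j \<in> coeff_support r \<Longrightarrow> int j < u $ y + int period"
  shows "coeff_support r \<subseteq> ydegs (weight n \<xi> u)"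
proof
  fix j assume j: "j \<in> coeff_support r"
  then have "int period dvd int j - int p"
    using r by (simp add: residue_homogeneous_def nat_mod_eq_iff_int_dvd)
  then have cong: "int period dvd int j - u $ y" using dvd_add[OF _ p] by fastforce
  have "int j \<le> u $ y"
  proof (rule ccontr)
    assume "\<not> int j \<le> u $ y"
    then have "int period \<le> int j - u $ y" using cong by (simp add: zdvd_imp_le)
    with below[OF j] show False by simp
  qed
  then have "0 \<le> u $ k" for k using u by (cases "k = y") auto
  then obtain e where e: "expvec e = u" by (rule expvec_surj_nonneg)
  have "int (Poly_Mapping.lookup e y) = u $ y" by (simp only: e flip: expvec_nth)
  then have "Poly_Mapping.lookup e y \<in> ydegs (weight n \<xi> u)"
    using e by (auto simp: ydegs_def wt_def)
  moreover have "j \<le> Poly_Mapping.lookup e y" "j mod period = Poly_Mapping.lookup e y mod period"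
    using \<open>int j \<le> u $ y\<close> \<open>int (Poly_Mapping.lookup e y) = u $ y\<close> cong
    by (simp_all add: nat_mod_eq_iff_int_dvd)
  ultimately show "j \<in> ydegs (weight n \<xi> u)" by (rule ydegs_downward_closed)
qed

text \<open>This is where the hypothesis \<open>i \<in> M\<close> enters. The witness is the exponent vector of
  \<open>y\<^sup>d\<close> plus \<open>\<gamma>\<close>, shifted by the multiple of \<open>c\<close> that brings its \<open>y\<close>-entry into
  \<open>(d - period, d]\<close>.\<close>

lemma shift_into_period:
  assumes \<gamma>: "weight n \<xi> \<gamma> = i"
    and \<gamma>_M: "\<And>k. k \<noteq> y \<Longrightarrow> 0 \<le> int period * \<gamma> $ k + c $ k * \<gamma> $ y"
  obtains u where "weight n \<xi> u = wadd (wt (Poly_Mapping.single y d)) i"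
    and "\<And>k. k \<noteq> y \<Longrightarrow> 0 \<le> u $ k" and "int d < u $ y + int period"
proof
  define q where "q = (- \<gamma> $ y) div int period"
  define r where "r = (- \<gamma> $ y) mod int period"
  have qr: "- \<gamma> $ y = int period * q + r" and r: "0 \<le> r" "r < int period"
    using period_pos by (simp_all add: q_def r_def)
  define u where "u = expvec (Poly_Mapping.single y d) + \<gamma> + (- q) *s c"
  show "weight n \<xi> u = wadd (wt (Poly_Mapping.single y d)) i"
    unfolding u_def weight_add_multiple_c using \<gamma> by (simp add: weight_add wt_def)
  have \<gamma>_y: "\<gamma> $ y = - (int period * q) - r" using qr by simp
  have u_y: "u $ y = int d - r" using int_period by (simp add: u_def \<gamma>_y algebra_simps)
  then show "int d < u $ y + int period" using r by simp
  fix k assume k: "k \<noteq> y"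
  have "int period * u $ k = (int period * \<gamma> $ k + c $ k * \<gamma> $ y) + c $ k * r"
    using k by (simp add: u_def \<gamma>_y algebra_simps lookup_single)
  also have "\<dots> \<ge> 0" using \<gamma>_M[OF k] c_nonneg[OF k] r by simp
  finally show "0 \<le> u $ k" using period_pos by (simp add: zero_le_mult_iff)
qed

lemma residue_homogeneous_ypoly_sum_weight:
  assumes F: "F \<in> Rw n \<xi> (wadd (weight n \<xi> u) (wt e))" and p: "int period dvd int p - u $ y"
  shows "residue_homogeneous period (p + Poly_Mapping.lookup e y) (ypoly y F)"
  unfolding residue_homogeneous_def
proof
  fix j assume "j \<in> coeff_support (ypoly y F)"
  then obtain e' where e': "wt e' = wadd (weight n \<xi> u) (wt e)" "Poly_Mapping.lookup e' y = j"
    using coeff_support_ypoly[OF F] by (auto simp: ydegs_def)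
  then have "weight n \<xi> (expvec e') = weight n \<xi> (u + expvec e)"
    by (simp add: wt_def weight_add)
  from weight_eq_imp_period_dvd[OF this]
  have "int period dvd int j - (u $ y + int (Poly_Mapping.lookup e y))" using e'(2) by simp
  then have "int period dvd (int j - (u $ y + int (Poly_Mapping.lookup e y))) - (int p - u $ y)"
    using p by (rule dvd_diff)
  then show "j mod period = (p + Poly_Mapping.lookup e y) mod period"
    by (simp add: nat_mod_eq_iff_int_dvd algebra_simps)
qed

text \<open>The leading term of \<open>g * a\<close> shows that the top \<open>y\<close>-degree of \<open>a\<close> occurs in weight \<open>v\<close>;
  the other exponents of \<open>a\<close> lie below it in the same residue class.\<close>

lemma coeff_support_monic_quotient:
  fixes g a :: "'k::field poly"
  assumes monic: "lead_coeff g = 1" and a: "residue_homogeneous period (degree a) a"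
    and ga: "coeff_support (g * a) \<subseteq> ydegs (wadd (wt (Poly_Mapping.single y (degree g))) v)"
  shows "coeff_support a \<subseteq> ydegs v"
proof (cases "a = 0")
  case False
  have "g \<noteq> 0" using monic by auto
  then have "coeff (g * a) (degree g + degree a) = lead_coeff a"
    using lead_coeff_mult[of g a] degree_mult_eq[OF _ False, of g] monic by simp
  then have "degree g + degree a \<in> ydegs (wadd (wt (Poly_Mapping.single y (degree g))) v)"
    using ga False by (auto simp: coeff_support_def)
  then have top: "degree a \<in> ydegs v" using ydegs_diff[of "degree g + degree a" "degree g" v] by simp
  show ?thesis
  proof
    fix j assume j: "j \<in> coeff_support a"
    then show "j \<in> ydegs v"
      using ydegs_downward_closed[OF top le_degree_if_coeff_support[OF j]] a
      by (simp add: residue_homogeneous_def)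
  qed
qed (simp add: coeff_support_def)

lemma lift_sum_of_multiples:
  fixes G H F :: "('m \<Rightarrow>\<^sub>0 nat) \<Rightarrow>\<^sub>0 'k::field"
  assumes G: "G \<in> Rw n \<xi> w" and H: "H \<in> Rw n \<xi> z" and F: "F \<in> Rw n \<xi> v"
    and a: "coeff_support a \<subseteq> ydegs va" and r: "coeff_support r \<subseteq> ydegs vr"
    and weights: "wadd w va = v" "wadd z vr = v"
    and f: "ypoly y F = ypoly y G * a + ypoly y H * r"
  obtains A B where "A \<in> Rw n \<xi> va" and "B \<in> Rw n \<xi> vr" and "F = G * A + H * B"
proof -
  obtain A where A: "A \<in> Rw n \<xi> va" "ypoly y A = a"
    using a ypoly_image_Rw by (metis (no_types, lifting) imageE mem_Collect_eq)
  obtain B where B: "B \<in> Rw n \<xi> vr" "ypoly y B = r"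
    using r ypoly_image_Rw by (metis (no_types, lifting) imageE mem_Collect_eq)
  have "G * A + H * B \<in> Rw n \<xi> v"
    using Rw_mult[OF G A(1)] Rw_mult[OF H B(1)] weights by (simp add: Rw_add)
  moreover have "ypoly y (G * A + H * B) = ypoly y F"
    by (simp add: ypoly_add ypoly_mult A(2) B(2) f)
  ultimately have "F = G * A + H * B" using inj_onD[OF inj_on_ypoly_Rw] F by metis
  then show thesis using A(1) B(1) that by blast
qed

lemma Rw_bezout_decomposition:
  fixes G H F :: "('m \<Rightarrow>\<^sub>0 nat) \<Rightarrow>\<^sub>0 'k::field"
  assumes G: "G \<in> Rw n \<xi> w" and w: "w = wt (Poly_Mapping.single y (degree (ypoly y G)))"
    and monic: "lead_coeff (ypoly y G) = 1"
    and H: "H \<in> Rw n \<xi> z" and H0: "H \<noteq> 0" and cop: "coprime (ypoly y G) (ypoly y H)"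
    and u: "weight n \<xi> u = wadd w i" "\<And>k. k \<noteq> y \<Longrightarrow> 0 \<le> u $ k"
      "int (degree (ypoly y G)) < u $ y + int period"
    and F: "F \<in> Rw n \<xi> (wadd (wadd w z) i)"
  obtains A B where "A \<in> Rw n \<xi> (wadd z i)" and "B \<in> Rw n \<xi> (wadd w i)" and "F = G * A + H * B"
proof -
  define g h f where "g = ypoly y G" and "h = ypoly y H" and "f = ypoly y F"
  obtain s t where bezout: "s * g + t * h = 1"
    using coprime_imp_bezout_field_poly cop unfolding g_def h_def by blast
  obtain eH where eH: "eH \<in> Poly_Mapping.keys H" using H0 by (metis all_not_in_conv keys_eq_empty)
  define p where "p = nat (u $ y mod int period)"
  have "int p = u $ y mod int period" using period_pos by (simp add: p_def)
  then have p: "int period dvd int p - u $ y"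
    using dvd_minus_mod[of "int period" "u $ y"] by (simp add: dvd_diff_commute)
  have "g \<noteq> 0" using monic g_def by auto
  have h_hom: "residue_homogeneous period (Poly_Mapping.lookup eH y) h"
    using residue_homogeneous_ypoly_ydegs[OF H] wt_if_in_keys[OF H eH] by (auto simp: h_def ydegs_def)
  have "wadd (wadd w z) i = wadd (weight n \<xi> u) (wt eH)"
    using u(1) wt_if_in_keys[OF H eH] by (simp add: wadd_def ac_simps)
  then have "F \<in> Rw n \<xi> (wadd (weight n \<xi> u) (wt eH))" using F by simp
  then have f_hom: "residue_homogeneous period (p + Poly_Mapping.lookup eH y) f"
    unfolding f_def using p by (rule residue_homogeneous_ypoly_sum_weight)
  obtain a r where f_eq: "f = g * a + h * r" and a_hom: "residue_homogeneous period (degree a) a"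
    and r_hom: "residue_homogeneous period p r" and r_deg: "\<forall>j\<in>coeff_support r. j < degree g"
    using bezout_residue_decomposition[OF period_pos \<open>g \<noteq> 0\<close> bezout
        residue_homogeneous_ypoly[OF G, folded g_def] h_hom f_hom] by blast
  have r_supp: "coeff_support r \<subseteq> ydegs (wadd w i)"
    using coeff_support_subset_ydegs_weight[OF u(2) p r_hom] r_deg u(1,3) g_def by fastforce
  have "coeff_support (h * r) \<subseteq> ydegs (wadd z (wadd w i))"
    using coeff_support_mult_ydegs[OF coeff_support_ypoly[OF H] r_supp] h_def by simp
  moreover have "coeff_support (g * a) \<subseteq> coeff_support f \<union> coeff_support (h * r)"
    using f_eq by (auto simp: coeff_support_def)
  ultimately have "coeff_support (g * a) \<subseteq> ydegs (wadd w (wadd z i))"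
    using coeff_support_ypoly[OF F] f_def by (auto simp: wadd_assoc wadd_left_commute)
  then have a_supp: "coeff_support a \<subseteq> ydegs (wadd z i)"
    using coeff_support_monic_quotient[OF monic[folded g_def] a_hom] w g_def by simp
  show thesis
    by (rule lift_sum_of_multiples[OF G H F a_supp r_supp])
      (use f_eq that in \<open>simp_all add: f_def g_def h_def wadd_assoc wadd_left_commute\<close>)
qed

lemma wt_zero: "wt 0 = (\<lambda>_. 0)"
  by (simp add: wt_def weight_def iinner_def expvec_def fun_eq_iff)

lemma Rw_subset_sum_of_multiples:
  fixes G H :: "('m \<Rightarrow>\<^sub>0 nat) \<Rightarrow>\<^sub>0 'k::field"
  assumes G: "G \<in> Rw n \<xi> w" and H: "H \<in> Rw n \<xi> z" and cop: "coprime_poly G H"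
    and monic: "monic_in y G" and \<gamma>: "weight n \<xi> \<gamma> = i"
    and \<gamma>_M: "\<And>k. k \<noteq> y \<Longrightarrow> 0 \<le> int period * \<gamma> $ k + c $ k * \<gamma> $ y"
  shows "Rw n \<xi> (wadd (wadd w z) i)
    \<subseteq> {G * A + H * B | A B. A \<in> Rw n \<xi> (wadd z i) \<and> B \<in> Rw n \<xi> (wadd w i)}"
proof
  fix F :: "('m \<Rightarrow>\<^sub>0 nat) \<Rightarrow>\<^sub>0 'k" assume F: "F \<in> Rw n \<xi> (wadd (wadd w z) i)"
  obtain d where monic_g: "lead_coeff (ypoly y G) = 1" and deg: "degree (ypoly y G) = d"
    and "Poly_Mapping.single y d \<in> Poly_Mapping.keys G"
    using monic_in_imp_ypoly[OF monic] .
  then have w: "w = wt (Poly_Mapping.single y d)" using wt_if_in_keys[OF G] by simp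
  show "F \<in> {G * A + H * B | A B. A \<in> Rw n \<xi> (wadd z i) \<and> B \<in> Rw n \<xi> (wadd w i)}"
  proof (cases "d = 0")
    case True
    then have w0: "w = (\<lambda>_. 0)" using w wt_zero by simp
    have "ypoly y G = 1" using monic_g deg True by (metis degree_0_id one_pCons)
    moreover have "(1 :: ('m \<Rightarrow>\<^sub>0 nat) \<Rightarrow>\<^sub>0 'k) \<in> Rw n \<xi> w"
      using Rw_single_wt[of 0 w 1] w0 wt_zero by simp
    ultimately have "G = 1" using inj_onD[OF inj_on_ypoly_Rw] G by (metis ypoly_one)
    then have "F = G * F + H * 0" by simp
    moreover have "F \<in> Rw n \<xi> (wadd z i)" using F w0 by (simp add: wadd_zero_left)
    ultimately show ?thesis using Rw_zero by blast
  next
    case False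
    have "H \<noteq> 0"
    proof
      assume "H = 0"
      then have "G dvd 1" using cop unfolding coprime_poly_def by simp
      then show False using degree_ypoly_unit deg False by metis
    qed
    then have "ypoly y H \<noteq> 0" using inj_onD[OF inj_on_ypoly_Rw _ H Rw_zero] by auto
    moreover have "ypoly y G \<noteq> 0" using monic_g by auto
    ultimately have "coprime (ypoly y G) (ypoly y H)" using ypoly_coprime G H cop by blast
    moreover obtain u where "weight n \<xi> u = wadd w i" "\<And>k. k \<noteq> y \<Longrightarrow> 0 \<le> u $ k"
      "int d < u $ y + int period"
      using shift_into_period[OF \<gamma> \<gamma>_M] w by blast
    ultimately obtain A B where "A \<in> Rw n \<xi> (wadd z i)" "B \<in> Rw n \<xi> (wadd w i)" "F = G * A + H * B"
      using Rw_bezout_decomposition[OF G _ monic_g H \<open>H \<noteq> 0\<close>] F w deg by blast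
    then show ?thesis by blast
  qed
qed

text \<open>The test vectors \<open>\<eta> = period \<cdot> e\<^sub>k + c\<^sub>k \<cdot> e\<^sub>y\<close> are nonnegative and orthogonal to \<open>c\<close>.\<close>

lemma Mset_imp_shift_bound:
  assumes "i \<in> Mset n \<xi> c"
  obtains \<gamma> where "weight n \<xi> \<gamma> = i"
    and "\<And>k. k \<noteq> y \<Longrightarrow> 0 \<le> int period * \<gamma> $ k + c $ k * \<gamma> $ y"
proof -
  obtain \<gamma> where \<gamma>: "weight n \<xi> \<gamma> = i"
    and \<eta>: "\<And>\<eta>. \<eta> \<in> nonneg_orthant \<Longrightarrow> \<eta> \<bullet> rvec c = 0 \<Longrightarrow> 0 \<le> \<eta> \<bullet> rvec \<gamma>"
    using assms unfolding Mset_def by blast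
  have "0 \<le> int period * \<gamma> $ k + c $ k * \<gamma> $ y" if k: "k \<noteq> y" for k
  proof -
    define \<eta> :: "real ^ 'm" where "\<eta> = real period *\<^sub>R axis k 1 + real_of_int (c $ k) *\<^sub>R axis y 1"
    have inner: "\<eta> \<bullet> rvec v = real period * v $ k + real_of_int (c $ k) * v $ y" for v
      by (simp add: \<eta>_def inner_add_left inner_axis' rvec_def)
    have "\<eta> \<in> nonneg_orthant"
      using c_nonneg[OF k] k by (simp add: nonneg_orthant_def \<eta>_def axis_def)
    moreover have "real period = - real_of_int (c $ y)"
      using int_period by (metis of_int_minus of_int_of_nat_eq)
    then have "\<eta> \<bullet> rvec c = 0" unfolding inner by (simp add: algebra_simps)
    ultimately have "0 \<le> \<eta> \<bullet> rvec \<gamma>" by (rule \<eta>)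
    then have "0 \<le> real_of_int (int period * \<gamma> $ k + c $ k * \<gamma> $ y)" unfolding inner by simp
    then show ?thesis by linarith
  qed
  then show thesis using that \<gamma> by blast
qed

end

section \<open>The direction of the edge\<close>

lemma proportional_imp_multiple_primitive:
  fixes u c :: "int ^ 'm::finite"
  assumes prim: "primitive_lattice c" and c_j0: "c $ j0 \<noteq> 0"
    and proportional: "\<And>j. u $ j * c $ j0 = u $ j0 * c $ j"
  shows "\<exists>t. u = t *s c"
proof -
  define g where "g = gcd (u $ j0) (c $ j0)"
  define a where "a = u $ j0 div g"
  define b where "b = c $ j0 div g"
  have "g \<noteq> 0" using c_j0 by (simp add: g_def)
  have "coprime a b" unfolding a_def b_def g_def using c_j0 by (intro div_gcd_coprime) simp
  have proportional': "u $ j * b = a * c $ j" for j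
  proof -
    have "g * (u $ j * b) = g * (a * c $ j)"
      using proportional[of j] by (simp add: a_def b_def g_def algebra_simps)
    then show ?thesis using \<open>g \<noteq> 0\<close> by simp
  qed
  have "b dvd c $ j" for j
    using proportional'[of j] \<open>coprime a b\<close>
    by (metis coprime_commute coprime_dvd_mult_right_iff dvd_triv_right)
  then have "is_unit b" using prim unfolding primitive_lattice_def by blast
  then have "\<bar>b\<bar> = 1" by (simp only: zdvd1_eq)
  then have "b * b = 1" by (metis abs_mult_self_eq mult_1)
  then have "u $ j = (a * b) * c $ j" for j
    using proportional'[of j] by (metis mult.assoc mult.commute mult_1)
  then show ?thesis by (intro exI[of _ "a * b"]) (simp add: vec_eq_iff)
qed

lemma real_multiple_imp_multiple_primitive:
  assumes prim: "primitive_lattice c" and l: "rvec u = l *\<^sub>R rvec c"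
  shows "\<exists>t. u = t *s c"
proof -
  obtain j0 where "c $ j0 \<noteq> 0" using prim by (auto simp: primitive_lattice_def vec_eq_iff)
  moreover have "u $ j * c $ j0 = u $ j0 * c $ j" for j
  proof -
    have "real_of_int (u $ j) = l * c $ j" "real_of_int (u $ j0) = l * c $ j0"
      using arg_cong[OF l, of "\<lambda>x. x $ j"] arg_cong[OF l, of "\<lambda>x. x $ j0"] by simp_all
    then have "real_of_int (u $ j * c $ j0) = real_of_int (u $ j0 * c $ j)" by simp
    then show ?thesis by (rule of_int_eq_iff[THEN iffD1])
  qed
  ultimately show ?thesis using prim proportional_imp_multiple_primitive by blast
qed

lemma dim_orthogonal_complement_weights:
  fixes \<xi> :: "nat \<Rightarrow> int ^ 'm::finite"
  assumes n: "n = CARD('m) - 1" and inj: "inj_on \<xi> {..<n}"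
    and indep: "independent ((\<lambda>i. rvec (\<xi> i)) ` {..<n})"
  shows "dim {v. \<forall>x \<in> span ((\<lambda>i. rvec (\<xi> i)) ` {..<n}). orthogonal x v} = 1"
proof -
  let ?S = "(\<lambda>i. rvec (\<xi> i)) ` {..<n}"
  have "card ?S = n"
    using inj by (subst card_image) (auto intro!: inj_onI simp: vec_eq_iff dest: inj_onD)
  then have "dim (span ?S) = n" using indep by (simp add: dim_eq_card_independent)
  moreover have "dim {v. \<forall>x \<in> span ?S. orthogonal x v} + dim (span ?S) = CARD('m)"
    using dim_subspace_orthogonal_to_vectors[of "span ?S" UNIV] by (simp add: subspace_span)
  moreover have "0 < CARD('m)" by simp
  ultimately show ?thesis using n by linarith
qed

lemma rvec_in_orthogonal_complement_weights:
  assumes "\<And>i. i < n \<Longrightarrow> iinner (\<xi> i) v = 0"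
  shows "rvec v \<in> {v. \<forall>x \<in> span ((\<lambda>i. rvec (\<xi> i)) ` {..<n}). orthogonal x v}"
proof (intro CollectI ballI)
  fix x assume "x \<in> span ((\<lambda>i. rvec (\<xi> i)) ` {..<n})"
  then have "orthogonal (rvec v) x"
  proof (rule orthogonal_to_span)
    fix s assume "s \<in> (\<lambda>i. rvec (\<xi> i)) ` {..<n}"
    then obtain i where "i < n" "s = rvec (\<xi> i)" by blast
    then show "orthogonal (rvec v) s"
      using assms unfolding orthogonal_def by (simp add: rvec_inner iinner_commute)
  qed
  then show "orthogonal x (rvec v)" by (simp add: orthogonal_commute)
qed

text \<open>The real span of the \<open>\<xi>\<^sub>i\<close> has codimension one, so its orthogonal complement is the
  line through \<open>c\<close>.\<close>

lemma orthogonal_to_weights_imp_multiple: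
  fixes \<xi> :: "nat \<Rightarrow> int ^ 'm::finite" and c u :: "int ^ 'm"
  assumes n: "n = CARD('m) - 1" and inj: "inj_on \<xi> {..<n}"
    and indep: "independent ((\<lambda>i. rvec (\<xi> i)) ` {..<n})"
    and c_orth: "\<forall>i<n. iinner (\<xi> i) c = 0" and prim: "primitive_lattice c"
    and u_orth: "\<And>i. i < n \<Longrightarrow> iinner (\<xi> i) u = 0"
  shows "\<exists>t. u = t *s c"
proof -
  have "rvec c \<noteq> 0" using prim by (auto simp: primitive_lattice_def vec_eq_iff)
  have "rvec u \<in> span {rvec c}"
  proof (rule ccontr)
    assume u_c: "rvec u \<notin> span {rvec c}"
    have "independent {rvec c}"
      using \<open>rvec c \<noteq> 0\<close> by (intro independent_insertI) (auto simp: independent_empty)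
    then have indep_uc: "independent {rvec u, rvec c}" by (rule independent_insertI[OF u_c])
    have "{rvec u, rvec c}
        \<subseteq> {v. \<forall>x \<in> span ((\<lambda>i. rvec (\<xi> i)) ` {..<n}). orthogonal x v}"
      using rvec_in_orthogonal_complement_weights[of n \<xi> u, OF u_orth]
        rvec_in_orthogonal_complement_weights[of n \<xi> c] c_orth by simp
    from independent_card_le_dim[OF this indep_uc]
    have "card {rvec u, rvec c} \<le> 1" by (simp only: dim_orthogonal_complement_weights[OF n inj indep])
    moreover have "rvec u \<noteq> rvec c" using u_c by (metis span_base singletonI)
    ultimately show False by simp
  qed
  then obtain l where "rvec u = l *\<^sub>R rvec c" by (auto simp: span_singleton)
  then show ?thesis using prim real_multiple_imp_multiple_primitive by blast
qed

lemma parallel_to_imp_scaleR: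
  assumes "aff_dim E = 1" and d: "parallel_to E d" and d': "parallel_to E d'"
  obtains l where "d' = l *\<^sub>R d" and "l \<noteq> 0"
proof -
  have "E \<noteq> {}" using assms(1) by auto
  then obtain a where "a \<in> E" by blast
  moreover have "E \<noteq> {a}" using assms(1) by auto
  ultimately obtain b where ab: "a \<in> E" "b \<in> E" "a \<noteq> b" by blast
  obtain s t where s: "b - a = s *\<^sub>R d" and t: "b - a = t *\<^sub>R d'"
    using d d' ab(1,2) unfolding parallel_to_def by blast
  then have "t \<noteq> 0" using ab(3) by auto
  then have "d' = (1 / t) *\<^sub>R (t *\<^sub>R d')" by simp
  also have "\<dots> = (s / t) *\<^sub>R d" using s t by simp
  finally have "d' = (s / t) *\<^sub>R d" .
  moreover have "d' \<noteq> 0" using d' by (simp add: parallel_to_def)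
  ultimately show thesis using that by force
qed

lemma descendant_direction_sign:
  assumes "aff_dim E = 1" and "descendant y E" and "parallel_to E (rvec c)"
  obtains c' where "c' = c \<or> c' = - c" and "c' $ y < 0" and "\<And>k. k \<noteq> y \<Longrightarrow> 0 \<le> c' $ k"
proof -
  obtain d where d: "parallel_to E d" "\<And>j. j \<noteq> y \<Longrightarrow> 0 \<le> d $ j" "d $ y < 0"
    using assms(2) unfolding descendant_def by blast
  obtain l where c_eq: "rvec c = l *\<^sub>R d" and "l \<noteq> 0"
    using parallel_to_imp_scaleR[OF assms(1) d(1) assms(3)] .
  have c_j: "real_of_int (c $ j) = l * d $ j" for j
    using arg_cong[OF c_eq, of "\<lambda>x. x $ j"] by simp
  show thesis
  proof (cases "l > 0")
    case True
    show thesis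
    proof (rule that[of c])
      have "real_of_int (c $ y) < 0" using c_j[of y] True d(3) by (simp add: mult_pos_neg)
      then show "c $ y < 0" by simp
      fix k assume "k \<noteq> y"
      then have "0 \<le> real_of_int (c $ k)" using c_j[of k] True d(2) by simp
      then show "0 \<le> c $ k" by simp
    qed simp
  next
    case False
    with \<open>l \<noteq> 0\<close> have "l < 0" by simp
    show thesis
    proof (rule that[of "- c"])
      have "0 < real_of_int (c $ y)" using c_j[of y] \<open>l < 0\<close> d(3) by (simp add: mult_neg_neg)
      then show "(- c) $ y < 0" by simp
      fix k assume "k \<noteq> y"
      then have "real_of_int (c $ k) \<le> 0"
        using c_j[of k] \<open>l < 0\<close> d(2) by (simp add: mult_nonpos_nonneg)
      then show "0 \<le> (- c) $ k" by simp
    qed simp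
  qed
qed

lemma Mset_uminus: "Mset n \<xi> (- c) = Mset n \<xi> c"
  by (simp add: Mset_def rvec_uminus)

theorem lemma2p7:
  fixes \<Delta> E :: "(real ^ 'm::finite) set"
    and y :: 'm and n :: nat
    and c :: "int ^ 'm" and \<xi> :: "nat \<Rightarrow> int ^ 'm"
    and G H :: "('m \<Rightarrow>\<^sub>0 nat) \<Rightarrow>\<^sub>0 'k::field"
    and w z :: "nat \<Rightarrow> int"
  assumes n_def: "n = CARD('m) - 1"
    and newton: "newton_polyhedron \<Delta>"
    and loose: "loose_edge \<Delta> E"
    and desc: "descendant y E"
    and c_prim: "primitive_lattice c"
    and c_par: "parallel_to E (rvec c)"
    and xi_nonneg: "\<forall>i<n. \<forall>j. 0 \<le> \<xi> i $ j"
    and xi_inj: "inj_on \<xi> {..<n}"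
    and xi_indep: "independent ((\<lambda>i. rvec (\<xi> i)) ` {..<n})"
    and xi_orth: "\<forall>i<n. iinner (\<xi> i) c = 0"
    and w: "w \<in> nonneg_weights n" and z: "z \<in> nonneg_weights n"
    and G: "G \<in> Rw n \<xi> w" and H: "H \<in> Rw n \<xi> z"
    and cop: "coprime_poly G H"
    and monic: "monic_in y G"
  shows "\<forall>i\<in>Mset n \<xi> c.
           {G * A + H * B | A B. A \<in> Rw n \<xi> (wadd z i) \<and> B \<in> Rw n \<xi> (wadd w i)}
             = Rw n \<xi> (wadd (wadd w z) i)"
proof
  fix i assume i: "i \<in> Mset n \<xi> c"
  have "aff_dim E = 1" using loose by (simp add: loose_edge_def)
  then obtain c' where c': "c' = c \<or> c' = - c" "c' $ y < 0" "\<And>k. k \<noteq> y \<Longrightarrow> 0 \<le> c' $ k"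
    using descendant_direction_sign desc c_par by blast
  have "edge_grading n \<xi> y c'"
  proof
    show "iinner (\<xi> j) c' = 0" if "j < n" for j
      using c'(1) xi_orth that by (auto simp: iinner_uminus)
    show "\<exists>t. u = t *s c'" if u_orth: "\<And>j. j < n \<Longrightarrow> iinner (\<xi> j) u = 0" for u
    proof -
      obtain t where "u = t *s c"
        using orthogonal_to_weights_imp_multiple[OF n_def xi_inj xi_indep xi_orth c_prim u_orth] ..
      then have "u = t *s c' \<or> u = (- t) *s c'" using c'(1) by (auto simp: vec_eq_iff)
      then show ?thesis by blast
    qed
  qed (use c' in auto)
  then interpret edge_grading n \<xi> y c' .
  obtain \<gamma> where "weight n \<xi> \<gamma> = i" "\<And>k. k \<noteq> y \<Longrightarrow> 0 \<le> int period * \<gamma> $ k + c' $ k * \<gamma> $ y"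
    using Mset_imp_shift_bound i c'(1) Mset_uminus by metis
  then show "{G * A + H * B | A B. A \<in> Rw n \<xi> (wadd z i) \<and> B \<in> Rw n \<xi> (wadd w i)}
      = Rw n \<xi> (wadd (wadd w z) i)"
    by (intro equalityI sum_of_multiples_subset_Rw[OF G H] Rw_subset_sum_of_multiples[OF G H cop monic])
qed

end
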